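(* Let $a$ and $b$ be relatively prime integers with $1<a<b$, let $(u,v)$ be the definitely least solution of $ax+by=1$, let $S=\langle a,b\rangle$ and $h=\min I(S)$. Then there are exactly $|v|$ minimal isolated gaps modulo $a$ of $I(S)$, namely $h,\ h+b,\ \dots,\ h+(|v|-1)b$.
   Context: $\langle a,b\rangle=\{\lambda_1a+\lambda_2b:\lambda_1,\lambda_2\in\mathbb{N}\}$. $I(S)$ is the set of isolated gaps of $S$ ($x\in\mathbb{N}\setminus S$ with $x-1,x+1\in S$), and for $i\in\{1,\dots,a-1\}$, $I_{i,a}(S)=\{s\in I(S):s\equiv i\pmod a\}$. For each $i$ with $I_{i,a}(S)\neq\varnothing$, $h_i=\min I_{i,a}(S)$ is called a minimal isolated gap modulo $a$ of $I(S)$. The definitely least solution $(u,v)$ of $ax+by=1$ is the unique integer solution with $|u|,|v|$ minimal; equivalently the one with $|u|\le b/2$, $|v|\le a/2$. *)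

theory Defs
  imports Main
begin

definition gen2 :: "nat \<Rightarrow> nat \<Rightarrow> nat set" where
  "gen2 a b = {l1 * a + l2 * b | l1 l2. True}"

definition isolated_gaps :: "nat set \<Rightarrow> nat set" where
  "isolated_gaps S = {x. x \<ge> 1 \<and> x \<notin> S \<and> x - 1 \<in> S \<and> x + 1 \<in> S}"

definition isolated_gaps_mod :: "nat set \<Rightarrow> nat \<Rightarrow> nat \<Rightarrow> nat set" where
  "isolated_gaps_mod S i a = {s \<in> isolated_gaps S. s mod a = i}"

definition min_isolated_gaps_mod :: "nat set \<Rightarrow> nat \<Rightarrow> nat set" where
  "min_isolated_gaps_mod S a =
     {LEAST s. s \<in> isolated_gaps_mod S i a | i. i \<in> {1..a-1} \<and> isolated_gaps_mod S i a \<noteq> {}}"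

definition definitely_least_solution :: "int \<Rightarrow> int \<Rightarrow> int \<Rightarrow> int \<Rightarrow> bool" where
  "definitely_least_solution a b u v \<longleftrightarrow>
     a * u + b * v = 1 \<and> 2 * \<bar>u\<bar> \<le> \<bar>b\<bar> \<and> 2 * \<bar>v\<bar> \<le> \<bar>a\<bar>"

end

theory Submission
  imports Defs
begin

text \<open>Every integer has a unique normal form \<open>y b + k a\<close> with \<open>0 \<le> y < a\<close>, and it lies in
  the semigroup iff \<open>k \<ge> 0\<close>. Put \<open>w = |v|\<close>, \<open>t = |u|\<close>; then \<open>w b - t a = \<plusminus>1\<close>, so
  moving to a neighbour shifts the normal form by \<open>(w, -t)\<close>, up to a wrap-around of \<open>y\<close> that
  costs \<open>b\<close> in \<open>k\<close>. Because \<open>2w \<le> a\<close> and \<open>2t \<le> b\<close>, the isolated gaps are exactly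
  \<open>y b - k a\<close> with \<open>a - w \<le> y < a\<close> and \<open>1 \<le> k \<le> t\<close>, i.e. \<open>h + j b + i a\<close> with
  \<open>j < w\<close>, \<open>i < t\<close> and \<open>h = (a - w) b - t a\<close>. Since \<open>a\<close> and \<open>b\<close> are coprime and \<open>w < a\<close>,
  the residue modulo \<open>a\<close> of such a gap determines \<open>j\<close>, so the least gap in its class is
  \<open>h + j b\<close>.\<close>

definition int_gen2 :: "int \<Rightarrow> int \<Rightarrow> int set" where
  "int_gen2 a b = {l1 * a + l2 * b | l1 l2. 0 \<le> l1 \<and> 0 \<le> l2}"

lemma int_mem_int_gen2_iff: "int x \<in> int_gen2 (int a) (int b) \<longleftrightarrow> x \<in> gen2 a b"
proof
  assume "int x \<in> int_gen2 (int a) (int b)"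
  then obtain l1 l2 where "0 \<le> l1" "0 \<le> l2" "int x = l1 * int a + l2 * int b"
    unfolding int_gen2_def by auto
  then have "int x = int (nat l1 * a + nat l2 * b)" by simp
  then have "x = nat l1 * a + nat l2 * b" by (simp only: of_nat_eq_iff)
  then show "x \<in> gen2 a b" unfolding gen2_def by auto
next
  assume "x \<in> gen2 a b"
  then obtain l1 l2 where "x = l1 * a + l2 * b" unfolding gen2_def by auto
  then show "int x \<in> int_gen2 (int a) (int b)" unfolding int_gen2_def by force
qed

lemma int_gen2_nonneg: "m \<in> int_gen2 a b \<Longrightarrow> 0 \<le> a \<Longrightarrow> 0 \<le> b \<Longrightarrow> 0 \<le> m"
  unfolding int_gen2_def by auto

lemma int_gen2_normal_form:
  fixes a b n :: int
  assumes "coprime a b" and "0 < a"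
  obtains y k where "0 \<le> y" "y < a" "n = y * b + k * a"
proof -
  obtain u v where uv: "u * a + v * b = 1"
    using bezout_int[of a b] assms(1) by auto
  define q r where "q = n * v div a" and "r = n * v mod a"
  have "n = n * (u * a + v * b)" using uv by simp
  also have "\<dots> = (q * a + r) * b + n * u * a"
    unfolding q_def r_def by (simp add: algebra_simps)
  also have "\<dots> = r * b + (q * b + n * u) * a"
    by (simp add: algebra_simps)
  finally show thesis
    using that[of r] assms(2) unfolding r_def by auto
qed

lemma normal_form_mem_int_gen2_iff:
  fixes a b y k :: int
  assumes "coprime a b" and "0 < a" and "0 < b" and "0 \<le> y" and "y < a"
  shows "y * b + k * a \<in> int_gen2 a b \<longleftrightarrow> 0 \<le> k"
proof
  assume "y * b + k * a \<in> int_gen2 a b"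
  then obtain l1 l2 where l: "0 \<le> l1" "0 \<le> l2" "y * b + k * a = l1 * a + l2 * b"
    unfolding int_gen2_def by auto
  then have shift: "(l2 - y) * b = (k - l1) * a" by (simp add: algebra_simps)
  then have "a dvd l2 - y"
    using assms(1) by (metis coprime_commute coprime_dvd_mult_left_iff dvd_triv_right)
  then obtain m where m: "l2 - y = a * m" by blast
  have "0 \<le> m"
  proof (rule ccontr)
    assume "\<not> 0 \<le> m"
    then have "a * m \<le> a * (- 1)" using assms(2) by (intro mult_left_mono) auto
    then show False using m l(2) assms(5) by simp
  qed
  have "(k - l1) * a = (m * b) * a"
    using shift m by (simp add: algebra_simps)
  then have "k - l1 = m * b" using assms(2) by simp
  moreover have "0 \<le> m * b" using \<open>0 \<le> m\<close> assms(3) by simp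
  ultimately show "0 \<le> k" using l(1) by simp
next
  assume "0 \<le> k"
  moreover have "y * b + k * a = k * a + y * b" by simp
  ultimately show "y * b + k * a \<in> int_gen2 a b"
    unfolding int_gen2_def using assms(4) by blast
qed

lemma gap_between_members_iff:
  fixes a b w t x :: int
  assumes "coprime a b" and "0 < a" and "0 < b" and "0 \<le> w" and "0 \<le> t"
    and "2 * w \<le> a" and "2 * t \<le> b"
  defines "e \<equiv> w * b - t * a"
  shows "x \<notin> int_gen2 a b \<and> x + e \<in> int_gen2 a b \<and> x - e \<in> int_gen2 a b \<longleftrightarrow>
         (\<exists>y k. a - w \<le> y \<and> y < a \<and> 1 \<le> k \<and> k \<le> t \<and> x = y * b - k * a)"
    (is "?gap \<longleftrightarrow> ?shape")
proof -
  have mem_iff: "y * b + k * a \<in> int_gen2 a b \<longleftrightarrow> 0 \<le> k" if "0 \<le> y" "y < a" for y k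
    using normal_form_mem_int_gen2_iff[OF assms(1-3) that] .
  show ?thesis
  proof
    assume gap: ?gap
    obtain y k where y: "0 \<le> y" "y < a" and x: "x = y * b + k * a"
      using int_gen2_normal_form[OF assms(1,2)] .
    have "k < 0" using gap mem_iff[OF y] x by auto
    have "a \<le> y + w"
    proof (rule ccontr)
      assume "\<not> a \<le> y + w"
      moreover have "x + e = (y + w) * b + (k - t) * a"
        unfolding x e_def by (simp add: algebra_simps)
      ultimately show False
        using gap mem_iff[of "y + w" "k - t"] y assms(4,5) \<open>k < 0\<close> by auto
    qed
    have "w \<le> y"
    proof (rule ccontr)
      assume "\<not> w \<le> y"
      moreover have "x - e = (y - w + a) * b + (k + t - b) * a"
        unfolding x e_def by (simp add: algebra_simps)
      ultimately show False
        using gap mem_iff[of "y - w + a" "k + t - b"] y assms(4-7) \<open>k < 0\<close> by auto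
    qed
    have "x - e = (y - w) * b + (k + t) * a"
      unfolding x e_def by (simp add: algebra_simps)
    then have "0 \<le> k + t"
      using gap mem_iff[of "y - w" "k + t"] y \<open>w \<le> y\<close> assms(4) by auto
    then show ?shape
      using \<open>a \<le> y + w\<close> y \<open>k < 0\<close> x by (intro exI[of _ y] exI[of _ "- k"]) auto
  next
    assume ?shape
    then obtain y k where y: "a - w \<le> y" "y < a" and k: "1 \<le> k" "k \<le> t"
      and x: "x = y * b - k * a" by auto
    have "x = y * b + (- k) * a" using x by simp
    moreover have "x + e = (y + w - a) * b + (b - k - t) * a"
      unfolding x e_def by (simp add: algebra_simps)
    moreover have "x - e = (y - w) * b + (t - k) * a"
      unfolding x e_def by (simp add: algebra_simps)
    ultimately show ?gap
      using mem_iff[of y "- k"] mem_iff[of "y + w - a" "b - k - t"] mem_iff[of "y - w" "t - k"]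
        y k assms(4,6,7) by auto
  qed
qed

lemma isolated_gaps_gen2_iff:
  fixes a b x :: nat and e :: int
  assumes "e = 1 \<or> e = -1"
  defines "S \<equiv> int_gen2 (int a) (int b)"
  shows "x \<in> isolated_gaps (gen2 a b) \<longleftrightarrow> int x \<notin> S \<and> int x + e \<in> S \<and> int x - e \<in> S"
proof -
  have "x \<in> isolated_gaps (gen2 a b) \<longleftrightarrow> int x \<notin> S \<and> int x + 1 \<in> S \<and> int x - 1 \<in> S"
  proof
    assume "x \<in> isolated_gaps (gen2 a b)"
    then show "int x \<notin> S \<and> int x + 1 \<in> S \<and> int x - 1 \<in> S"
      unfolding isolated_gaps_def S_def
      by (auto simp flip: int_mem_int_gen2_iff simp: of_nat_diff add.commute)
  next
    assume gap: "int x \<notin> S \<and> int x + 1 \<in> S \<and> int x - 1 \<in> S"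
    then have "1 \<le> x" using int_gen2_nonneg[of "int x - 1"] unfolding S_def by fastforce
    then have "int (x - 1) = int x - 1" by simp
    then show "x \<in> isolated_gaps (gen2 a b)"
      unfolding isolated_gaps_def using gap \<open>1 \<le> x\<close> unfolding S_def
      by (auto simp flip: int_mem_int_gen2_iff simp: add.commute)
  qed
  then show ?thesis using assms(1) by auto
qed

lemma isolated_gaps_gen2_mod_nonzero:
  assumes "x \<in> isolated_gaps (gen2 a b)"
  shows "x mod a \<noteq> 0"
proof
  assume "x mod a = 0"
  then have "x = x div a * a + 0 * b" using div_mult_mod_eq[of x a] by simp
  then have "x \<in> gen2 a b" unfolding gen2_def by blast
  then show False using assms unfolding isolated_gaps_def by simp
qed

lemma inj_on_mod_add_mult:
  fixes a b c :: nat
  assumes "coprime a b"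
  shows "inj_on (\<lambda>j. (c + j * b) mod a) {..<a}"
proof -
  have "i = j" if "i \<le> j" "j < a" "(c + i * b) mod a = (c + j * b) mod a" for i j
  proof -
    have le: "c + i * b \<le> c + j * b" using that(1) by simp
    have "a dvd (c + j * b) - (c + i * b)"
      using mod_eq_dvd_iff_nat[OF le] that(3) by (simp add: eq_commute)
    then have "a dvd (j - i) * b" by (simp add: diff_mult_distrib)
    then have "a dvd j - i" using assms by (simp add: coprime_dvd_mult_left_iff)
    then show "i = j" using that by (auto dest: dvd_imp_le)
  qed
  then show ?thesis unfolding inj_on_def by (metis lessThan_iff nat_le_linear order_le_less_trans)
qed

lemma abs_bezout_coeffs:
  fixes a b u v :: int
  assumes uv: "a * u + b * v = 1" and "1 < a" and "1 < b"
  shows "u \<noteq> 0" and "v \<noteq> 0" and "\<bar>v\<bar> * b - \<bar>u\<bar> * a = 1 \<or> \<bar>v\<bar> * b - \<bar>u\<bar> * a = -1"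
proof -
  show "u \<noteq> 0" using uv assms(3) by (auto simp: zmult_eq_1_iff)
  show "v \<noteq> 0" using uv assms(2) by (auto simp: zmult_eq_1_iff)
  have "\<not> (0 < u \<and> 0 < v)"
  proof
    assume "0 < u \<and> 0 < v"
    then have "a * 1 \<le> a * u" "b * 1 \<le> b * v" using assms(2,3) by (simp_all add: mult_left_mono)
    then show False using uv assms(2,3) by linarith
  qed
  moreover have "\<not> (u < 0 \<and> v < 0)"
  proof
    assume "u < 0 \<and> v < 0"
    then have "a * u < 0" "b * v < 0" using assms(2,3) by (simp_all add: mult_pos_neg)
    then show False using uv by simp
  qed
  ultimately show "\<bar>v\<bar> * b - \<bar>u\<bar> * a = 1 \<or> \<bar>v\<bar> * b - \<bar>u\<bar> * a = -1"
    using uv \<open>u \<noteq> 0\<close> \<open>v \<noteq> 0\<close> by (cases "0 < u") (auto simp: algebra_simps)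
qed

text \<open>The parameters \<open>t\<close> and \<open>w\<close> stand for \<open>|u|\<close> and \<open>|v|\<close>.\<close>

locale abs_least_solution =
  fixes a b :: nat and t w :: int
  assumes coprime: "coprime a b"
    and t_pos: "0 < t" and w_pos: "0 < w"
    and t_le: "2 * t \<le> int b" and w_le: "2 * w \<le> int a"
    and unimodular: "w * int b - t * int a = 1 \<or> w * int b - t * int a = -1"
begin

lemma a_pos: "0 < a" and b_pos: "0 < b"
  using t_pos t_le w_pos w_le by simp_all

definition h :: nat where
  "h = nat ((int a - w) * int b - t * int a)"

lemma int_h: "int h = (int a - w) * int b - t * int a"
proof -
  have "2 * ((int a - w) * int b - t * int a) = (int a - 2 * w) * int b + (int b - 2 * t) * int a"
    by (simp add: algebra_simps)
  also have "\<dots> \<ge> 0" using t_le w_le by simp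
  finally show ?thesis unfolding h_def by simp
qed

lemma mem_isolated_gaps_iff:
  "x \<in> isolated_gaps (gen2 a b) \<longleftrightarrow> (\<exists>j i. j < nat w \<and> i < nat t \<and> x = h + j * b + i * a)"
proof -
  have "x \<in> isolated_gaps (gen2 a b) \<longleftrightarrow>
      (\<exists>y k. int a - w \<le> y \<and> y < int a \<and> 1 \<le> k \<and> k \<le> t \<and> int x = y * int b - k * int a)"
  proof -
    have "coprime (int a) (int b)" using coprime by simp
    from gap_between_members_iff[OF this _ _ _ _ w_le t_le] a_pos b_pos t_pos w_pos
    show ?thesis unfolding isolated_gaps_gen2_iff[OF unimodular] by simp
  qed
  also have "\<dots> \<longleftrightarrow> (\<exists>j i. j < nat w \<and> i < nat t \<and> x = h + j * b + i * a)"
  proof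
    assume "\<exists>y k. int a - w \<le> y \<and> y < int a \<and> 1 \<le> k \<and> k \<le> t \<and> int x = y * int b - k * int a"
    then obtain y k where yk: "int a - w \<le> y" "y < int a" "1 \<le> k" "k \<le> t" "int x = y * int b - k * int a"
      by auto
    define j i where "j = nat (y - (int a - w))" and "i = nat (t - k)"
    have "j < nat w" "i < nat t" using yk unfolding j_def i_def by auto
    moreover have "int x = int (h + j * b + i * a)"
      using yk int_h unfolding j_def i_def by (simp add: algebra_simps)
    ultimately show "\<exists>j i. j < nat w \<and> i < nat t \<and> x = h + j * b + i * a"
      by (simp only: of_nat_eq_iff) blast
  next
    assume "\<exists>j i. j < nat w \<and> i < nat t \<and> x = h + j * b + i * a"
    then obtain j i where ji: "j < nat w" "i < nat t" "x = h + j * b + i * a" by auto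
    have "int x = (int a - w + int j) * int b - (t - int i) * int a"
      using ji(3) int_h by (simp add: algebra_simps)
    then show "\<exists>y k. int a - w \<le> y \<and> y < int a \<and> 1 \<le> k \<and> k \<le> t \<and> int x = y * int b - k * int a"
      using ji by (intro exI[of _ "int a - w + int j"] exI[of _ "t - int i"]) auto
  qed
  finally show ?thesis .
qed

lemma row_start_mem_isolated_gaps:
  assumes "j < nat w"
  shows "h + j * b \<in> isolated_gaps (gen2 a b)"
  unfolding mem_isolated_gaps_iff
  by (rule exI[of _ j], rule exI[of _ 0]) (use assms t_pos in auto)

lemma Least_isolated_gaps: "(LEAST x. x \<in> isolated_gaps (gen2 a b)) = h"
proof (rule Least_equality)
  show "h \<in> isolated_gaps (gen2 a b)"
    using row_start_mem_isolated_gaps[of 0] w_pos by simp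
qed (auto simp: mem_isolated_gaps_iff)

lemma Least_isolated_gaps_mod:
  assumes "j < nat w"
  shows "(LEAST s. s \<in> isolated_gaps_mod (gen2 a b) ((h + j * b) mod a) a) = h + j * b"
proof (rule Least_equality)
  show "h + j * b \<in> isolated_gaps_mod (gen2 a b) ((h + j * b) mod a) a"
    unfolding isolated_gaps_mod_def using row_start_mem_isolated_gaps[OF assms] by simp
next
  fix s assume "s \<in> isolated_gaps_mod (gen2 a b) ((h + j * b) mod a) a"
  then have "s \<in> isolated_gaps (gen2 a b)" and "s mod a = (h + j * b) mod a"
    unfolding isolated_gaps_mod_def by auto
  then obtain j' i where ji: "j' < nat w" "s = h + j' * b + i * a"
    unfolding mem_isolated_gaps_iff by blast
  with \<open>s mod a = (h + j * b) mod a\<close> have same_mod: "(h + j' * b) mod a = (h + j * b) mod a"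
    by simp
  have "nat w \<le> a" using w_le by linarith
  then have "j' = j"
    using assms ji(1) by (intro inj_onD[OF inj_on_mod_add_mult[OF coprime, of h] same_mod]) auto
  then show "h + j * b \<le> s" using ji(2) by simp
qed

lemma min_isolated_gaps_mod_eq:
  "min_isolated_gaps_mod (gen2 a b) a = (\<lambda>j. h + j * b) ` {..<nat w}"
proof
  show "min_isolated_gaps_mod (gen2 a b) a \<subseteq> (\<lambda>j. h + j * b) ` {..<nat w}"
  proof
    fix z assume "z \<in> min_isolated_gaps_mod (gen2 a b) a"
    then obtain r s where z: "z = (LEAST s. s \<in> isolated_gaps_mod (gen2 a b) r a)"
      and s: "s \<in> isolated_gaps_mod (gen2 a b) r a"
      unfolding min_isolated_gaps_mod_def by auto
    from s have "s \<in> isolated_gaps (gen2 a b)" and r: "r = s mod a"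
      unfolding isolated_gaps_mod_def by auto
    then obtain j i where "j < nat w" "s = h + j * b + i * a"
      unfolding mem_isolated_gaps_iff by blast
    then have "r = (h + j * b) mod a" using r by simp
    then have "z = h + j * b" using z Least_isolated_gaps_mod[OF \<open>j < nat w\<close>] by simp
    then show "z \<in> (\<lambda>j. h + j * b) ` {..<nat w}" using \<open>j < nat w\<close> by auto
  qed
next
  show "(\<lambda>j. h + j * b) ` {..<nat w} \<subseteq> min_isolated_gaps_mod (gen2 a b) a"
  proof clarify
    fix j assume "j < nat w"
    define r where "r = (h + j * b) mod a"
    have gap: "h + j * b \<in> isolated_gaps (gen2 a b)"
      using row_start_mem_isolated_gaps[OF \<open>j < nat w\<close>] .
    have "0 < r" "r < a"
      using isolated_gaps_gen2_mod_nonzero[OF gap] a_pos unfolding r_def by simp_all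
    then have "r \<in> {1..a - 1}" by simp
    moreover have "isolated_gaps_mod (gen2 a b) r a \<noteq> {}"
      using gap unfolding isolated_gaps_mod_def r_def by auto
    ultimately show "h + j * b \<in> min_isolated_gaps_mod (gen2 a b) a"
      using Least_isolated_gaps_mod[OF \<open>j < nat w\<close>] unfolding min_isolated_gaps_mod_def
      by (intro CollectI exI[of _ r]) (simp add: r_def)
  qed
qed

lemma card_min_isolated_gaps_mod: "card (min_isolated_gaps_mod (gen2 a b) a) = nat w"
  unfolding min_isolated_gaps_mod_eq using b_pos by (simp add: card_image inj_on_def)

end

theorem proposition4p2:
  fixes a b :: nat and u v :: int
  assumes "coprime a b" and "1 < a" and "a < b"
    and "definitely_least_solution (int a) (int b) u v"
  shows "min_isolated_gaps_mod (gen2 a b) a =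
           {(LEAST x. x \<in> isolated_gaps (gen2 a b)) + k * b | k. k < nat \<bar>v\<bar>}
         \<and> card (min_isolated_gaps_mod (gen2 a b) a) = nat \<bar>v\<bar>"
proof -
  have uv: "int a * u + int b * v = 1" and "2 * \<bar>u\<bar> \<le> int b" and "2 * \<bar>v\<bar> \<le> int a"
    using assms(4) unfolding definitely_least_solution_def by auto
  moreover have "1 < int a" "1 < int b" using assms(2,3) by simp_all
  ultimately interpret abs_least_solution a b "\<bar>u\<bar>" "\<bar>v\<bar>"
    using assms(1) abs_bezout_coeffs[OF uv] by unfold_locales auto
  show ?thesis
    using min_isolated_gaps_mod_eq card_min_isolated_gaps_mod
    unfolding Least_isolated_gaps by blast
qed

end
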